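(* Let $(\mathcal X,d)$ be a compact metric space and $K:\mathcal X^2\to\mathbb R$ continuous. If $\mu$ is a Borel probability measure on $\mathcal X$ and $T:\mathcal X\to\mathcal X$ is an ergodic measure-preserving transformation relative to $\mu$ (not necessarily continuous), then for $\mu$-almost every $x$, $$\lim_{n\to\infty}\frac1{n^2}\sum_{i=1}^n\sum_{j=1}^nK(T^ix,T^jx)=\iint_{\mathcal X\times\mathcal X}K(y,z)\,d\mu(y)\,d\mu(z).$$ *)

theory Defs
  imports "HOL-Probability.Probability"
begin

definition mpt :: "'a measure \<Rightarrow> ('a \<Rightarrow> 'a) \<Rightarrow> bool" where
  "mpt M T \<longleftrightarrow> T \<in> measurable M M \<and>
     (\<forall>A \<in> sets M. emeasure M (T -` A \<inter> space M) = emeasure M A)"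

definition ergodic_mpt :: "'a measure \<Rightarrow> ('a \<Rightarrow> 'a) \<Rightarrow> bool" where
  "ergodic_mpt M T \<longleftrightarrow> mpt M T \<and>
     (\<forall>A \<in> sets M. T -` A \<inter> space M = A \<longrightarrow> emeasure M A = 0 \<or> emeasure M A = 1)"

end

theory Submission
  imports Defs
begin

text \<open>
  Birkhoff's ergodic theorem for bounded measurable functions is proved from the maximal ergodic
  inequality: if \<open>\<integral>g < 0\<close>, the set where the Birkhoff sums of \<open>g\<close> are unbounded above is
  \<open>T\<close>-invariant, so it is null or conull, and conull would give \<open>\<integral>g \<ge> 0\<close>.

  For the double average, fix a typical \<open>x\<close> and put \<open>F\<^sub>n y = (1/n) \<Sum>\<^sub>j K (y, T\<^sup>j x)\<close> and
  \<open>h y = \<integral>K (y, z) d\<mu>(z)\<close>. Birkhoff's theorem gives \<open>F\<^sub>n p \<rightarrow> h p\<close> for all \<open>p\<close> in a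
  countable set containing finite nets at every scale, and \<open>(1/n) \<Sum>\<^sub>i h (T\<^sup>i x) \<rightarrow> \<integral>h\<close>.
  Uniform continuity of \<open>K\<close> on the compact square makes the \<open>F\<^sub>n\<close> equicontinuous, so
  \<open>F\<^sub>n \<rightarrow> h\<close> uniformly, and the double average \<open>(1/n) \<Sum>\<^sub>i F\<^sub>n (T\<^sup>i x)\<close> has the same limit
  as \<open>(1/n) \<Sum>\<^sub>i h (T\<^sup>i x)\<close>.
\<close>

definition birkhoff_sum :: "('a \<Rightarrow> 'a) \<Rightarrow> ('a \<Rightarrow> real) \<Rightarrow> nat \<Rightarrow> 'a \<Rightarrow> real" where
  "birkhoff_sum T g n x = (\<Sum>i<n. g ((T ^^ i) x))"

definition birkhoff_max :: "('a \<Rightarrow> 'a) \<Rightarrow> ('a \<Rightarrow> real) \<Rightarrow> nat \<Rightarrow> 'a \<Rightarrow> real" where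
  "birkhoff_max T g n x = Max ((\<lambda>k. birkhoff_sum T g k x) ` {..n})"

lemma birkhoff_sum_0 [simp]: "birkhoff_sum T g 0 x = 0"
  by (simp add: birkhoff_sum_def)

lemma birkhoff_sum_Suc: "birkhoff_sum T g (Suc n) x = g x + birkhoff_sum T g n (T x)"
  unfolding birkhoff_sum_def sum.lessThan_Suc_shift by (simp add: funpow_Suc_right del: funpow.simps)

lemma birkhoff_sum_diff_const: "birkhoff_sum T (\<lambda>x. f x - c) n x = birkhoff_sum T f n x - real n * c"
  by (simp add: birkhoff_sum_def sum_subtractf)

lemma birkhoff_sum_uminus: "birkhoff_sum T (\<lambda>x. - f x) n x = - birkhoff_sum T f n x"
  by (simp add: birkhoff_sum_def sum_negf)

lemma sum_orbit_eq_birkhoff_sum: "(\<Sum>i\<in>{1..n}. g ((T ^^ i) x)) = birkhoff_sum T g n (T x)"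
  by (simp add: birkhoff_sum_def sum.atLeast1_atMost_eq funpow_Suc_right del: funpow.simps)

lemma abs_birkhoff_sum_le:
  assumes "\<And>x. \<bar>g x\<bar> \<le> C"
  shows "\<bar>birkhoff_sum T g n x\<bar> \<le> real n * C"
proof -
  have "\<bar>birkhoff_sum T g n x\<bar> \<le> (\<Sum>i<n. \<bar>g ((T ^^ i) x)\<bar>)"
    unfolding birkhoff_sum_def by (rule sum_abs)
  also have "\<dots> \<le> real n * C"
    using sum_bounded_above[of "{..<n}" "\<lambda>i. \<bar>g ((T ^^ i) x)\<bar>" C] assms by simp
  finally show ?thesis .
qed

lemma birkhoff_sum_le_birkhoff_max: "k \<le> n \<Longrightarrow> birkhoff_sum T g k x \<le> birkhoff_max T g n x"
  unfolding birkhoff_max_def by (rule Max_ge) auto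

lemma birkhoff_max_nonneg: "0 \<le> birkhoff_max T g n x"
  using birkhoff_sum_le_birkhoff_max[of 0 n T g x] by simp

lemma birkhoff_max_attained: "\<exists>k\<le>n. birkhoff_max T g n x = birkhoff_sum T g k x"
proof -
  have "birkhoff_max T g n x \<in> (\<lambda>k. birkhoff_sum T g k x) ` {..n}"
    unfolding birkhoff_max_def by (rule Max_in) auto
  then show ?thesis
    by auto
qed

lemma abs_birkhoff_max_le:
  assumes "\<And>x. \<bar>g x\<bar> \<le> C"
  shows "\<bar>birkhoff_max T g n x\<bar> \<le> real n * C"
proof -
  obtain k where k: "k \<le> n" "birkhoff_max T g n x = birkhoff_sum T g k x"
    using birkhoff_max_attained by meson
  have "0 \<le> C"
    using assms[of x] by linarith
  have "\<bar>birkhoff_sum T g k x\<bar> \<le> real k * C"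
    by (rule abs_birkhoff_sum_le) (rule assms)
  then have "birkhoff_sum T g k x \<le> real k * C"
    by linarith
  also have "\<dots> \<le> real n * C"
    using k(1) \<open>0 \<le> C\<close> by (intro mult_right_mono) simp_all
  finally show ?thesis
    using k(2) birkhoff_max_nonneg[of T g n x] by linarith
qed

text \<open>Where the maximum is positive it is attained at some \<open>k \<ge> 1\<close>, and
  \<open>S\<^sub>k x = g x + S\<^sub>k\<^sub>-\<^sub>1 (T x)\<close> with \<open>S\<^sub>k\<^sub>-\<^sub>1 (T x)\<close> bounded by the maximum at \<open>T x\<close>.\<close>
lemma birkhoff_max_diff_le:
  "birkhoff_max T g n x - birkhoff_max T g n (T x) \<le> indicator {y. 0 < birkhoff_max T g n y} x * g x"
proof (cases "0 < birkhoff_max T g n x")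
  case True
  obtain k where k: "k \<le> n" "birkhoff_max T g n x = birkhoff_sum T g k x"
    using birkhoff_max_attained by meson
  with True obtain j where j: "k = Suc j"
    by (cases k) auto
  have "birkhoff_sum T g j (T x) \<le> birkhoff_max T g n (T x)"
    using j k by (intro birkhoff_sum_le_birkhoff_max) simp
  then show ?thesis
    using True k j birkhoff_sum_Suc[of T g j x] by simp
next
  case False
  then show ?thesis
    using birkhoff_max_nonneg[of T g n x] birkhoff_max_nonneg[of T g n "T x"] by simp
qed

lemma bdd_above_birkhoff_sum_iff:
  "bdd_above (range (\<lambda>n. birkhoff_sum T g n (T x))) \<longleftrightarrow> bdd_above (range (\<lambda>n. birkhoff_sum T g n x))"
proof
  assume "bdd_above (range (\<lambda>n. birkhoff_sum T g n (T x)))"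
  then obtain B where B: "\<And>n. birkhoff_sum T g n (T x) \<le> B"
    by (auto simp: bdd_above_def)
  have "birkhoff_sum T g n x \<le> max 0 (g x + B)" for n
  proof (cases n)
    case (Suc m)
    then show ?thesis
      using B[of m] by (simp add: birkhoff_sum_Suc)
  qed simp
  then show "bdd_above (range (\<lambda>n. birkhoff_sum T g n x))"
    by (intro bdd_aboveI2)
next
  assume "bdd_above (range (\<lambda>n. birkhoff_sum T g n x))"
  then obtain B where B: "\<And>n. birkhoff_sum T g n x \<le> B"
    by (auto simp: bdd_above_def)
  have "birkhoff_sum T g n (T x) \<le> B - g x" for n
    using B[of "Suc n"] by (simp add: birkhoff_sum_Suc)
  then show "bdd_above (range (\<lambda>n. birkhoff_sum T g n (T x)))"
    by (intro bdd_aboveI2)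
qed

lemma LIMSEQ_divide_of_linear_bounds:
  fixes a :: "nat \<Rightarrow> real"
  assumes upper: "\<And>e. 0 < e \<Longrightarrow> \<exists>B. \<forall>n. a n \<le> real n * (L + e) + B"
    and lower: "\<And>e. 0 < e \<Longrightarrow> \<exists>B. \<forall>n. real n * (L - e) - B \<le> a n"
  shows "(\<lambda>n. a n / real n) \<longlonglongrightarrow> L"
proof (rule tendstoI)
  fix e :: real
  assume "0 < e"
  then obtain B\<^sub>1 B\<^sub>2 where B\<^sub>1: "\<And>n. a n \<le> real n * (L + e/2) + B\<^sub>1"
    and B\<^sub>2: "\<And>n. real n * (L - e/2) - B\<^sub>2 \<le> a n"
    using upper[of "e/2"] lower[of "e/2"] by auto
  have "eventually (\<lambda>n. \<bar>B\<^sub>1\<bar> / real n < e/2) sequentially"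
    and "eventually (\<lambda>n. \<bar>B\<^sub>2\<bar> / real n < e/2) sequentially"
    using \<open>0 < e\<close> by (auto intro!: order_tendstoD(2)[OF lim_const_over_n])
  then show "eventually (\<lambda>n. dist (a n / real n) L < e) sequentially"
    using eventually_gt_at_top[of 0]
  proof eventually_elim
    case (elim n)
    then have "real n > 0"
      by simp
    have "a n / real n \<le> (real n * (L + e/2) + B\<^sub>1) / real n"
      and "(real n * (L - e/2) - B\<^sub>2) / real n \<le> a n / real n"
      using B\<^sub>1[of n] B\<^sub>2[of n] \<open>real n > 0\<close> by (simp_all add: divide_right_mono)
    then have "a n / real n \<le> L + e/2 + B\<^sub>1 / real n" and "L - e/2 - B\<^sub>2 / real n \<le> a n / real n"
      using \<open>real n > 0\<close> by (simp_all add: add_divide_distrib diff_divide_distrib)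
    moreover have "B\<^sub>1 / real n \<le> \<bar>B\<^sub>1\<bar> / real n" and "B\<^sub>2 / real n \<le> \<bar>B\<^sub>2\<bar> / real n"
      using \<open>real n > 0\<close> by (simp_all add: divide_right_mono)
    ultimately show ?case
      unfolding dist_real_def abs_less_iff using elim by linarith
  qed
qed

lemma distr_mpt_eq:
  assumes "mpt M T"
  shows "distr M M T = M"
proof (rule measure_eqI)
  fix A assume "A \<in> sets (distr M M T)"
  then show "emeasure (distr M M T) A = emeasure M A"
    using assms by (simp add: emeasure_distr mpt_def)
qed simp

lemma integral_mpt_comp:
  fixes g :: "'a \<Rightarrow> real"
  assumes "mpt M T" and "g \<in> borel_measurable M"
  shows "(\<integral>x. g (T x) \<partial>M) = integral\<^sup>L M g"
  using integral_distr[of T M M g] assms distr_mpt_eq[OF assms(1)] by (simp add: mpt_def)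

text \<open>The preimage of a null set under a measure-preserving map is null; no measurability
  of \<open>P\<close> is needed.\<close>
lemma AE_mpt_comp:
  assumes T: "mpt M T" and "AE x in M. P x"
  shows "AE x in M. P (T x)"
proof -
  obtain N where N: "{x \<in> space M. \<not> P x} \<subseteq> N" "emeasure M N = 0" "N \<in> sets M"
    using assms(2) by (rule AE_E)
  have "T -` N \<inter> space M \<in> null_sets M"
    using T N(2,3) by (auto simp: mpt_def null_sets_def measurable_sets)
  moreover have "{x \<in> space M. \<not> P (T x)} \<subseteq> T -` N \<inter> space M"
    using T N(1) by (auto simp: mpt_def dest: measurable_space)
  ultimately show ?thesis
    by (rule AE_I')
qed

lemma pred_bdd_above_range [measurable (raw)]:
  fixes f :: "nat \<Rightarrow> 'a \<Rightarrow> real"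
  assumes [measurable]: "\<And>n. f n \<in> borel_measurable M"
  shows "Measurable.pred M (\<lambda>x. bdd_above (range (\<lambda>n. f n x)))"
proof -
  have "bdd_above (range (\<lambda>n. f n x)) \<longleftrightarrow> (\<exists>B::nat. \<forall>n. f n x \<le> real B)" for x
  proof
    assume "bdd_above (range (\<lambda>n. f n x))"
    then obtain B where "\<And>n. f n x \<le> B"
      by (auto simp: bdd_above_def)
    moreover obtain k :: nat where "B \<le> real k"
      using real_arch_simple by blast
    ultimately show "\<exists>B::nat. \<forall>n. f n x \<le> real B"
      by (meson order_trans)
  qed (auto intro: bdd_aboveI2)
  then show ?thesis
    by simp
qed

locale ergodic_prob_space = prob_space M for M :: "'a measure" +
  fixes T :: "'a \<Rightarrow> 'a"
  assumes ergodic: "ergodic_mpt M T" and space_eq_UNIV: "space M = UNIV"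
begin

lemma mpt: "mpt M T"
  using ergodic by (simp add: ergodic_mpt_def)

lemma measurable_T [measurable]: "T \<in> measurable M M"
  using mpt by (simp add: mpt_def)

lemma borel_measurable_birkhoff_sum [measurable]:
  assumes [measurable]: "g \<in> borel_measurable M"
  shows "birkhoff_sum T g n \<in> borel_measurable M"
  unfolding birkhoff_sum_def by measurable

lemma borel_measurable_birkhoff_max [measurable]:
  assumes [measurable]: "g \<in> borel_measurable M"
  shows "birkhoff_max T g n \<in> borel_measurable M"
  unfolding birkhoff_max_def by measurable

lemma Collect_in_sets:
  assumes "Measurable.pred M P"
  shows "{x. P x} \<in> sets M"
proof -
  have "{x \<in> space M. P x} \<in> sets M"
    using assms by (rule predE)
  then show ?thesis
    by (simp add: space_eq_UNIV)
qed

lemma invariant_set_AE_cases: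
  assumes "A \<in> sets M" and "T -` A = A"
  shows "(AE x in M. x \<notin> A) \<or> (AE x in M. x \<in> A)"
proof -
  have "emeasure M A = 0 \<or> emeasure M A = 1"
    using ergodic assms space_eq_UNIV by (simp add: ergodic_mpt_def)
  then show ?thesis
    using assms(1) AE_not_in[of A M] AE_in_set_eq_1[of A] by (auto simp: null_sets_def emeasure_eq_measure)
qed

lemma maximal_ergodic_inequality:
  assumes [measurable]: "g \<in> borel_measurable M" and g_bound: "\<And>x. \<bar>g x\<bar> \<le> C"
  shows "0 \<le> (\<integral>x. indicator {y. 0 < birkhoff_max T g n y} x * g x \<partial>M)"
proof -
  let ?F = "birkhoff_max T g n"
  have [measurable]: "{y. 0 < ?F y} \<in> sets M"
    by (rule Collect_in_sets) measurable
  have F_bound: "\<bar>?F x\<bar> \<le> real n * C" for x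
    by (rule abs_birkhoff_max_le) (rule g_bound)
  have F_int: "integrable M ?F" and FT_int: "integrable M (\<lambda>x. ?F (T x))"
    using F_bound by (auto intro!: integrable_const_bound[where B="real n * C"])
  have I_int: "integrable M (\<lambda>x. indicator {y. 0 < ?F y} x * g x)"
    using g_bound order_trans[OF abs_ge_zero g_bound]
    by (intro integrable_const_bound[where B=C]) (auto simp: indicator_def)
  have "0 = integral\<^sup>L M ?F - (\<integral>x. ?F (T x) \<partial>M)"
    by (simp add: integral_mpt_comp[OF mpt])
  also have "\<dots> = (\<integral>x. ?F x - ?F (T x) \<partial>M)"
    using F_int FT_int by simp
  also have "\<dots> \<le> (\<integral>x. indicator {y. 0 < ?F y} x * g x \<partial>M)"
    using F_int FT_int I_int by (intro integral_mono birkhoff_max_diff_le) auto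
  finally show ?thesis .
qed

lemma tendsto_integral_indicator_birkhoff_max:
  assumes [measurable]: "g \<in> borel_measurable M" and g_bound: "\<And>x. \<bar>g x\<bar> \<le> C"
    and unbounded: "AE x in M. \<not> bdd_above (range (\<lambda>n. birkhoff_sum T g n x))"
  shows "(\<lambda>n. \<integral>x. indicator {y. 0 < birkhoff_max T g n y} x * g x \<partial>M) \<longlonglongrightarrow> integral\<^sup>L M g"
proof (rule integral_dominated_convergence[where w="\<lambda>_. C"])
  have [measurable]: "{y. 0 < birkhoff_max T g n y} \<in> sets M" for n
    by (rule Collect_in_sets) measurable
  show "(\<lambda>x. indicator {y. 0 < birkhoff_max T g n y} x * g x) \<in> borel_measurable M" for n
    by measurable
  show "AE x in M. norm (indicator {y. 0 < birkhoff_max T g n y} x * g x) \<le> C" for n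
    using g_bound order_trans[OF abs_ge_zero g_bound] by (auto simp: indicator_def)
  show "AE x in M. (\<lambda>n. indicator {y. 0 < birkhoff_max T g n y} x * g x) \<longlonglongrightarrow> g x"
    using unbounded
  proof eventually_elim
    case (elim x)
    then obtain n\<^sub>0 where "0 < birkhoff_sum T g n\<^sub>0 x"
      by (auto simp: bdd_above_def not_le)
    then have "0 < birkhoff_max T g n x" if "n\<^sub>0 \<le> n" for n
      using birkhoff_sum_le_birkhoff_max[OF that, of T g x] by linarith
    then have "eventually (\<lambda>n. indicator {y. 0 < birkhoff_max T g n y} x * g x = g x) sequentially"
      unfolding eventually_sequentially by (auto simp: indicator_def)
    then show ?case
      by (rule tendsto_eventually)
  qed
qed auto

lemma AE_bdd_above_birkhoff_sum:
  assumes [measurable]: "g \<in> borel_measurable M" and g_bound: "\<And>x. \<bar>g x\<bar> \<le> C"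
    and negative: "integral\<^sup>L M g < 0"
  shows "AE x in M. bdd_above (range (\<lambda>n. birkhoff_sum T g n x))"
proof -
  define H where "H = {x. \<not> bdd_above (range (\<lambda>n. birkhoff_sum T g n x))}"
  have "H \<in> sets M"
    unfolding H_def by (rule Collect_in_sets) measurable
  moreover have "T -` H = H"
    unfolding H_def using bdd_above_birkhoff_sum_iff[of T g] by auto
  ultimately consider "AE x in M. x \<notin> H" | "AE x in M. x \<in> H"
    using invariant_set_AE_cases by blast
  then show ?thesis
  proof cases
    case 1
    then show ?thesis
      by (simp add: H_def)
  next
    case 2
    then have "(\<lambda>n. \<integral>x. indicator {y. 0 < birkhoff_max T g n y} x * g x \<partial>M) \<longlonglongrightarrow> integral\<^sup>L M g"
      unfolding H_def by (intro tendsto_integral_indicator_birkhoff_max[OF _ g_bound]) auto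
    then have "0 \<le> integral\<^sup>L M g"
      using maximal_ergodic_inequality[OF _ g_bound] by (intro LIMSEQ_le_const) auto
    with negative show ?thesis
      by simp
  qed
qed

lemma AE_birkhoff_sum_le_linear:
  assumes [measurable]: "f \<in> borel_measurable M" and f_bound: "\<And>x. \<bar>f x\<bar> \<le> C"
  shows "AE x in M. \<forall>e>0. \<exists>B. \<forall>n. birkhoff_sum T f n x \<le> real n * (integral\<^sup>L M f + e) + B"
proof -
  have "AE x in M. \<exists>B. \<forall>n. birkhoff_sum T f n x \<le> real n * c + B" if "integral\<^sup>L M f < c" for c
  proof -
    have "integrable M f"
      using f_bound by (intro integrable_const_bound[where B=C]) auto
    then have "integral\<^sup>L M (\<lambda>x. f x - c) < 0"
      using that by (simp add: prob_space)
    moreover have "\<bar>f x - c\<bar> \<le> C + \<bar>c\<bar>" for x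
      using f_bound[of x] by linarith
    ultimately have "AE x in M. bdd_above (range (\<lambda>n. birkhoff_sum T (\<lambda>x. f x - c) n x))"
      by (intro AE_bdd_above_birkhoff_sum) auto
    then show ?thesis
      by eventually_elim (auto simp: bdd_above_def birkhoff_sum_diff_const algebra_simps)
  qed
  then have "AE x in M. \<forall>k::nat. \<exists>B. \<forall>n.
      birkhoff_sum T f n x \<le> real n * (integral\<^sup>L M f + inverse (real (Suc k))) + B"
    by (simp add: AE_all_countable)
  then show ?thesis
  proof eventually_elim
    case (elim x)
    show ?case
    proof (intro allI impI)
      fix e :: real
      assume "0 < e"
      then obtain k where k: "inverse (real (Suc k)) < e"
        using ex_inverse_of_nat_less[of e] by (metis Suc_pred)
      obtain B where B: "\<And>n. birkhoff_sum T f n x \<le> real n * (integral\<^sup>L M f + inverse (real (Suc k))) + B"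
        using elim by blast
      have "real n * (integral\<^sup>L M f + inverse (real (Suc k))) \<le> real n * (integral\<^sup>L M f + e)" for n
        using k by (intro mult_left_mono) simp_all
      with B have "birkhoff_sum T f n x \<le> real n * (integral\<^sup>L M f + e) + B" for n
        by (meson add_right_mono order_trans)
      then show "\<exists>B. \<forall>n. birkhoff_sum T f n x \<le> real n * (integral\<^sup>L M f + e) + B"
        by blast
    qed
  qed
qed

theorem birkhoff_ergodic_theorem:
  assumes [measurable]: "f \<in> borel_measurable M" and f_bound: "\<And>x. \<bar>f x\<bar> \<le> C"
  shows "AE x in M. (\<lambda>n. birkhoff_sum T f n x / real n) \<longlonglongrightarrow> integral\<^sup>L M f"
proof -
  have upper: "AE x in M. \<forall>e>0. \<exists>B. \<forall>n. birkhoff_sum T f n x \<le> real n * (integral\<^sup>L M f + e) + B"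
    using f_bound by (intro AE_birkhoff_sum_le_linear[where C=C]) auto
  have "AE x in M. \<forall>e>0. \<exists>B. \<forall>n. birkhoff_sum T (\<lambda>x. - f x) n x \<le> real n * (integral\<^sup>L M (\<lambda>x. - f x) + e) + B"
    using f_bound by (intro AE_birkhoff_sum_le_linear[where C=C]) auto
  then have lower: "AE x in M. \<forall>e>0. \<exists>B. \<forall>n. real n * (integral\<^sup>L M f - e) - B \<le> birkhoff_sum T f n x"
    by eventually_elim (auto simp: birkhoff_sum_uminus algebra_simps)
  from upper lower show ?thesis
    by eventually_elim (intro LIMSEQ_divide_of_linear_bounds; auto)
qed

end

lemma abs_average_le:
  fixes f :: "nat \<Rightarrow> real"
  assumes "\<And>j. j \<in> {1..n} \<Longrightarrow> \<bar>f j\<bar> \<le> e" and "0 \<le> e"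
  shows "\<bar>(\<Sum>j\<in>{1..n}. f j) / real n\<bar> \<le> e"
proof (cases "n = 0")
  case False
  have "\<bar>\<Sum>j\<in>{1..n}. f j\<bar> \<le> (\<Sum>j\<in>{1..n}. \<bar>f j\<bar>)"
    by (rule sum_abs)
  also have "\<dots> \<le> real n * e"
    using sum_bounded_above[of "{1..n}" "\<lambda>j. \<bar>f j\<bar>" e] assms(1) by simp
  finally show ?thesis
    using False by (simp add: abs_divide pos_divide_le_eq mult.commute)
qed (use assms(2) in simp)

lemma uniform_modulus_fst:
  fixes K :: "'a::metric_space \<times> 'b::metric_space \<Rightarrow> 'c::metric_space"
  assumes "uniformly_continuous_on UNIV K" and "0 < e"
  obtains d where "0 < d" and "\<And>y y' z. dist y y' < d \<Longrightarrow> dist (K (y, z)) (K (y', z)) < e"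
proof -
  obtain d where "0 < d" and d: "\<And>p p'. dist p' p < d \<Longrightarrow> dist (K p') (K p) < e"
    using assms unfolding uniformly_continuous_on_def by blast
  moreover have "dist (K (y, z)) (K (y', z)) < e" if "dist y y' < d" for y y' z
    using d[of "(y, z)" "(y', z)"] that by (simp add: dist_Pair_Pair dist_commute)
  ultimately show ?thesis
    using that by blast
qed

lemma uniform_modulus_average_fst:
  fixes K :: "'a::metric_space \<times> 'b::metric_space \<Rightarrow> real"
  assumes "uniformly_continuous_on UNIV K" and "0 < e"
  shows "\<exists>d>0. \<forall>n y y'. dist y y' < d \<longrightarrow>
           \<bar>(\<Sum>j\<in>{1..n}. K (y, u j)) / real n - (\<Sum>j\<in>{1..n}. K (y', u j)) / real n\<bar> \<le> e"
proof -
  obtain d where "0 < d" and d: "\<And>y y' z. dist y y' < d \<Longrightarrow> dist (K (y, z)) (K (y', z)) < e"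
    using uniform_modulus_fst[OF assms] by blast
  have "\<bar>(\<Sum>j\<in>{1..n}. K (y, u j) - K (y', u j)) / real n\<bar> \<le> e" if "dist y y' < d" for n y y'
    using d[OF that] \<open>0 < e\<close> by (intro abs_average_le) (auto simp: dist_real_def less_imp_le)
  with \<open>0 < d\<close> show ?thesis
    by (auto simp: sum_subtractf diff_divide_distrib)
qed

lemma uniform_limit_of_finite_nets:
  fixes F :: "nat \<Rightarrow> 'a::metric_space \<Rightarrow> real"
  assumes equicont: "\<And>e. 0 < e \<Longrightarrow> \<exists>d>0. \<forall>n y y'. dist y y' < d \<longrightarrow> \<bar>F n y - F n y'\<bar> \<le> e"
    and g: "uniformly_continuous_on UNIV g"
    and nets: "\<And>d. 0 < d \<Longrightarrow> \<exists>P\<subseteq>D. finite P \<and> (\<forall>y. \<exists>p\<in>P. dist p y < d)"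
    and conv: "\<And>p. p \<in> D \<Longrightarrow> (\<lambda>n. F n p) \<longlonglongrightarrow> g p"
  shows "uniform_limit UNIV F g sequentially"
  unfolding uniform_limit_iff
proof (intro allI impI)
  fix e :: real
  assume "0 < e"
  then obtain d\<^sub>1 where "0 < d\<^sub>1" and d\<^sub>1: "\<And>n y y'. dist y y' < d\<^sub>1 \<Longrightarrow> \<bar>F n y - F n y'\<bar> \<le> e/3"
    using equicont[of "e/3"] by auto
  obtain d\<^sub>2 where "0 < d\<^sub>2" and d\<^sub>2: "\<And>y y'. dist y' y < d\<^sub>2 \<Longrightarrow> dist (g y') (g y) < e/3"
    using g \<open>0 < e\<close> unfolding uniformly_continuous_on_def by (meson UNIV_I divide_pos_pos zero_less_numeral)
  obtain P where "P \<subseteq> D" "finite P" and P: "\<And>y. \<exists>p\<in>P. dist p y < min d\<^sub>1 d\<^sub>2"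
    using nets[of "min d\<^sub>1 d\<^sub>2"] \<open>0 < d\<^sub>1\<close> \<open>0 < d\<^sub>2\<close> by auto
  have "\<forall>p\<in>P. \<forall>\<^sub>F n in sequentially. dist (F n p) (g p) < e/3"
  proof
    fix p
    assume "p \<in> P"
    with \<open>P \<subseteq> D\<close> \<open>0 < e\<close> show "\<forall>\<^sub>F n in sequentially. dist (F n p) (g p) < e/3"
      by (intro tendstoD[OF conv]) auto
  qed
  then have "\<forall>\<^sub>F n in sequentially. \<forall>p\<in>P. dist (F n p) (g p) < e/3"
    using \<open>finite P\<close> by (simp add: eventually_ball_finite_distrib)
  then show "\<forall>\<^sub>F n in sequentially. \<forall>y\<in>UNIV. dist (F n y) (g y) < e"
  proof eventually_elim
    case (elim n)
    show ?case
    proof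
      fix y
      obtain p where "p \<in> P" and "dist p y < min d\<^sub>1 d\<^sub>2"
        using P by blast
      then have "\<bar>F n y - F n p\<bar> \<le> e/3" and "dist (g p) (g y) < e/3"
        using d\<^sub>1 d\<^sub>2 by (auto simp: dist_commute)
      moreover have "dist (F n p) (g p) < e/3"
        using elim \<open>p \<in> P\<close> by blast
      ultimately show "dist (F n y) (g y) < e"
        unfolding dist_real_def by linarith
    qed
  qed
qed

lemma tendsto_average_of_uniform_limit:
  fixes F :: "nat \<Rightarrow> 'a \<Rightarrow> real"
  assumes unif: "uniform_limit UNIV F g sequentially"
    and lim: "(\<lambda>n. (\<Sum>i\<in>{1..n}. g (u i)) / real n) \<longlonglongrightarrow> L"
  shows "(\<lambda>n. (\<Sum>i\<in>{1..n}. F n (u i)) / real n) \<longlonglongrightarrow> L"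
proof -
  have "(\<lambda>n. (\<Sum>i\<in>{1..n}. F n (u i) - g (u i)) / real n) \<longlonglongrightarrow> 0"
  proof (rule tendstoI)
    fix e :: real
    assume "0 < e"
    then have "0 < e/2"
      by simp
    with unif have "\<forall>\<^sub>F n in sequentially. \<forall>y\<in>UNIV. dist (F n y) (g y) < e/2"
      unfolding uniform_limit_iff by blast
    then show "\<forall>\<^sub>F n in sequentially. dist ((\<Sum>i\<in>{1..n}. F n (u i) - g (u i)) / real n) 0 < e"
    proof eventually_elim
      case (elim n)
      then have "\<bar>(\<Sum>i\<in>{1..n}. F n (u i) - g (u i)) / real n\<bar> \<le> e/2"
        using \<open>0 < e\<close> by (intro abs_average_le) (auto simp: dist_real_def less_imp_le)
      with \<open>0 < e\<close> show ?case
        unfolding dist_real_def diff_zero by linarith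
    qed
  qed
  from tendsto_add[OF this lim] show ?thesis
    by (simp add: sum_subtractf diff_divide_distrib)
qed

lemma compact_imp_countable_finite_nets:
  assumes "compact (UNIV :: 'a::metric_space set)"
  obtains D :: "'a::metric_space set" where "countable D"
    and "\<And>d. 0 < d \<Longrightarrow> \<exists>P\<subseteq>D. finite P \<and> (\<forall>y. \<exists>p\<in>P. dist p y < d)"
proof -
  have "\<exists>P. finite P \<and> (\<forall>y::'a. \<exists>p\<in>P. dist p y < inverse (real (Suc k)))" for k
    using seq_compact_imp_totally_bounded[OF compact_imp_seq_compact[OF assms],
        rule_format, of "inverse (real (Suc k))"]
    by (auto simp: subset_eq)
  then obtain N :: "nat \<Rightarrow> 'a set"
    where N: "\<And>k. finite (N k)" "\<And>k y. \<exists>p\<in>N k. dist p y < inverse (real (Suc k))"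
    by metis
  show ?thesis
  proof
    show "countable (\<Union>k. N k)"
      using N(1) by (simp add: countable_finite)
    fix d :: real
    assume "0 < d"
    then obtain k where "inverse (real (Suc k)) < d"
      using ex_inverse_of_nat_less[of d] by (metis Suc_pred)
    then show "\<exists>P\<subseteq>\<Union>k. N k. finite P \<and> (\<forall>y. \<exists>p\<in>P. dist p y < d)"
      using N by (meson UNIV_I UN_upper order_less_trans)
  qed
qed

lemma uniformly_continuous_on_integral_fst:
  fixes K :: "'a::metric_space \<times> 'b::metric_space \<Rightarrow> real"
  assumes "prob_space M" and K: "uniformly_continuous_on UNIV K" and int: "\<And>y. integrable M (\<lambda>z. K (y, z))"
  shows "uniformly_continuous_on UNIV (\<lambda>y. \<integral>z. K (y, z) \<partial>M)"
  unfolding uniformly_continuous_on_def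
proof (intro allI impI)
  interpret prob_space M
    by fact
  fix e :: real
  assume "0 < e"
  then obtain d where "0 < d" and d: "\<And>y y' z. dist y y' < d \<Longrightarrow> dist (K (y, z)) (K (y', z)) < e/2"
    using uniform_modulus_fst[OF K, of "e/2"] by auto
  have "dist (\<integral>z. K (y', z) \<partial>M) (\<integral>z. K (y, z) \<partial>M) < e" if "dist y' y < d" for y y'
  proof -
    have "\<bar>\<integral>z. K (y', z) - K (y, z) \<partial>M\<bar> \<le> (\<integral>z. \<bar>K (y', z) - K (y, z)\<bar> \<partial>M)"
      by (rule integral_abs_bound)
    also have "\<dots> \<le> (\<integral>z. e/2 \<partial>M)"
      using int d[OF that] by (intro integral_mono) (auto simp: dist_real_def less_imp_le)
    finally show ?thesis
      using int \<open>0 < e\<close> by (simp add: dist_real_def prob_space)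
  qed
  with \<open>0 < d\<close> show "\<exists>d>0. \<forall>y\<in>UNIV. \<forall>y'\<in>UNIV. dist y' y < d \<longrightarrow>
      dist (\<integral>z. K (y', z) \<partial>M) (\<integral>z. K (y, z) \<partial>M) < e"
    by blast
qed

lemma tendsto_double_average:
  fixes K :: "'a::metric_space \<times> 'a \<Rightarrow> real" and u :: "nat \<Rightarrow> 'a"
  assumes K: "uniformly_continuous_on UNIV K" and h: "uniformly_continuous_on UNIV h"
    and nets: "\<And>d. 0 < d \<Longrightarrow> \<exists>P\<subseteq>D. finite P \<and> (\<forall>y. \<exists>p\<in>P. dist p y < d)"
    and conv: "\<And>p. p \<in> D \<Longrightarrow> (\<lambda>n. (\<Sum>j\<in>{1..n}. K (p, u j)) / real n) \<longlonglongrightarrow> h p"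
    and lim: "(\<lambda>n. (\<Sum>i\<in>{1..n}. h (u i)) / real n) \<longlonglongrightarrow> L"
  shows "(\<lambda>n. (1 / (real n)^2) * (\<Sum>i\<in>{1..n}. \<Sum>j\<in>{1..n}. K (u i, u j))) \<longlonglongrightarrow> L"
proof -
  define F where "F n y = (\<Sum>j\<in>{1..n}. K (y, u j)) / real n" for n y
  have "uniform_limit UNIV F h sequentially"
  proof (rule uniform_limit_of_finite_nets[OF _ h nets])
    show "\<exists>d>0. \<forall>n y y'. dist y y' < d \<longrightarrow> \<bar>F n y - F n y'\<bar> \<le> e" if "0 < e" for e
      unfolding F_def using K that by (rule uniform_modulus_average_fst)
    show "(\<lambda>n. F n p) \<longlonglongrightarrow> h p" if "p \<in> D" for p
      unfolding F_def using that by (rule conv)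
  qed
  from tendsto_average_of_uniform_limit[OF this lim] show ?thesis
    by (simp add: F_def sum_divide_distrib power2_eq_square)
qed

lemma continuous_on_compact_UNIV_bound:
  fixes f :: "'a::topological_space \<Rightarrow> real"
  assumes "compact (UNIV :: 'a set)" and "continuous_on UNIV f"
  obtains C where "\<And>x. \<bar>f x\<bar> \<le> C"
  using compact_imp_bounded[OF compact_continuous_image[OF assms(2,1)]]
  unfolding bounded_real by auto

lemma borel_measurable_continuous_on_UNIV:
  fixes f :: "'a::topological_space \<Rightarrow> real"
  assumes "sets M = sets borel" and "continuous_on UNIV f"
  shows "f \<in> borel_measurable M"
  by (subst measurable_cong_sets[OF assms(1) refl]) (rule borel_measurable_continuous_onI[OF assms(2)])

lemma integrable_continuous_on_compact_UNIV:
  fixes f :: "'a::topological_space \<Rightarrow> real"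
  assumes "compact (UNIV :: 'a set)" and "sets M = sets borel" and "finite_measure M"
    and "continuous_on UNIV f"
  shows "integrable M f"
proof -
  obtain C where "\<And>x. \<bar>f x\<bar> \<le> C"
    using continuous_on_compact_UNIV_bound[OF assms(1,4)] by blast
  then show ?thesis
    using assms(3) borel_measurable_continuous_on_UNIV[OF assms(2,4)]
    by (intro finite_measure.integrable_const_bound[where B=C]) auto
qed

lemma AE_orbit_average_continuous:
  fixes M :: "'a::metric_space measure" and f :: "'a \<Rightarrow> real"
  assumes "compact (UNIV :: 'a set)" and "sets M = sets borel" and "ergodic_prob_space M T"
    and "continuous_on UNIV f"
  shows "AE x in M. (\<lambda>n. (\<Sum>i\<in>{1..n}. f ((T ^^ i) x)) / real n) \<longlonglongrightarrow> integral\<^sup>L M f"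
proof -
  interpret ergodic_prob_space M T
    by fact
  obtain C where "\<And>x. \<bar>f x\<bar> \<le> C"
    using continuous_on_compact_UNIV_bound[OF assms(1,4)] by blast
  moreover have "f \<in> borel_measurable M"
    using assms(2,4) by (rule borel_measurable_continuous_on_UNIV)
  ultimately have "AE x in M. (\<lambda>n. birkhoff_sum T f n x / real n) \<longlonglongrightarrow> integral\<^sup>L M f"
    by (intro birkhoff_ergodic_theorem[where C=C])
  then show ?thesis
    unfolding sum_orbit_eq_birkhoff_sum by (rule AE_mpt_comp[OF mpt])
qed

theorem proposition2p10:
  fixes M :: "'a::metric_space measure"
    and K :: "'a \<times> 'a \<Rightarrow> real"
    and T :: "'a \<Rightarrow> 'a"
  assumes "compact (UNIV :: 'a set)"
    and "continuous_on UNIV K"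
    and "prob_space M"
    and "sets M = sets borel"
    and "ergodic_mpt M T"
  shows "AE x in M.
           (\<lambda>n. (1 / (real n)^2) * (\<Sum>i\<in>{1..n}. \<Sum>j\<in>{1..n}. K ((T ^^ i) x, (T ^^ j) x)))
           \<longlonglongrightarrow> (\<integral>y. \<integral>z. K (y, z) \<partial>M \<partial>M)"
proof -
  have erg: "ergodic_prob_space M T"
    using assms(3,5) sets_eq_imp_space_eq[OF assms(4)]
    by (simp add: ergodic_prob_space_def ergodic_prob_space_axioms_def)
  have K_uc: "uniformly_continuous_on UNIV K"
    using compact_uniformly_continuous[OF assms(2)] compact_Times[OF assms(1) assms(1)] by simp
  have K_cont: "continuous_on UNIV (\<lambda>z. K (y, z))" for y
    by (rule continuous_on_compose2[OF assms(2)]) (auto intro: continuous_intros)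
  define h where "h = (\<lambda>y. \<integral>z. K (y, z) \<partial>M)"
  have h_uc: "uniformly_continuous_on UNIV h"
    unfolding h_def using assms(1,3,4) K_cont prob_space.finite_measure
    by (intro uniformly_continuous_on_integral_fst[OF assms(3) K_uc] integrable_continuous_on_compact_UNIV)
  obtain D :: "'a set" where "countable D"
    and nets: "\<And>d. 0 < d \<Longrightarrow> \<exists>P\<subseteq>D. finite P \<and> (\<forall>y. \<exists>p\<in>P. dist p y < d)"
    using compact_imp_countable_finite_nets[OF assms(1)] by blast
  have "AE x in M. \<forall>p\<in>D. (\<lambda>n. (\<Sum>j\<in>{1..n}. K (p, (T ^^ j) x)) / real n) \<longlonglongrightarrow> h p"
    unfolding AE_ball_countable[OF \<open>countable D\<close>] h_def
    using AE_orbit_average_continuous[OF assms(1,4) erg K_cont] by blast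
  moreover have "AE x in M. (\<lambda>n. (\<Sum>i\<in>{1..n}. h ((T ^^ i) x)) / real n) \<longlonglongrightarrow> integral\<^sup>L M h"
    using AE_orbit_average_continuous[OF assms(1,4) erg uniformly_continuous_imp_continuous[OF h_uc]] .
  ultimately show ?thesis
    unfolding h_def[symmetric] by eventually_elim (rule tendsto_double_average[OF K_uc h_uc nets]; blast)
qed

end
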